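(* Let $X$ be a connected involutive rack. If $(V,\pi)$ is a strong irreducible representation of $X$ such that there exists $x_0\in X$ with $\{v\in V:\pi_{x_0}(v)=v\}=\{0\}$, then $V$ is one-dimensional.
   Context: A rack is a set $X$ with a binary operation $\rhd$ such that each $x\mapsto x\rhd y$ is bijective and $(x\rhd y)\rhd z=(x\rhd z)\rhd(y\rhd z)$. $X$ is involutive if $(x\rhd y)\rhd y=x$ for all $x,y$, and connected if for all $x,z\in X$ there is $y$ with $z=x\rhd y$. A stabilizing family of $X$ is a finite family $(u_1,\ldots,u_n)$ with $(\cdots(x\rhd u_1)\cdots)\rhd u_n=x$ for all $x$. A representation of $X$ is a complex vector space $V$ with $\pi:X\to GL(V)$ satisfying $\pi_{x\rhd y}=\pi_y\pi_x\pi_y^{-1}$; it is strong if $\pi_{u_n}\cdots\pi_{u_1}=\mathrm{id}_V$ for every stabilizing family $(u_1,\ldots,u_n)$, and irreducible if its only subspaces invariant under all $\pi_x$ are $\{0\}$ and $V$. *)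

theory Defs
  imports Complex_Main
begin

text \<open>Racks: a set (here: a type 'a) with a binary operation op, written x \<rhd> y = op x y.\<close>

definition rack :: "('a \<Rightarrow> 'a \<Rightarrow> 'a) \<Rightarrow> bool" where
  "rack op \<longleftrightarrow> (\<forall>y. bij (\<lambda>x. op x y)) \<and>
     (\<forall>x y z. op (op x y) z = op (op x z) (op y z))"

definition involutive_rack :: "('a \<Rightarrow> 'a \<Rightarrow> 'a) \<Rightarrow> bool" where
  "involutive_rack op \<longleftrightarrow> (\<forall>x y. op (op x y) y = x)"

definition connected_rack :: "('a \<Rightarrow> 'a \<Rightarrow> 'a) \<Rightarrow> bool" where
  "connected_rack op \<longleftrightarrow> (\<forall>x z. \<exists>y. z = op x y)"

text \<open>A stabilizing family (u_1,...,u_n) is given as the list [u_1,...,u_n];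
  foldl op x us = (...(x \<rhd> u_1)...) \<rhd> u_n.\<close>
definition stabilizing :: "('a \<Rightarrow> 'a \<Rightarrow> 'a) \<Rightarrow> 'a list \<Rightarrow> bool" where
  "stabilizing op us \<longleftrightarrow> (\<forall>x. foldl op x us = x)"

text \<open>Composition pi_{u_n} o ... o pi_{u_1} for us = [u_1,...,u_n].\<close>
definition rep_word :: "('a \<Rightarrow> 'v \<Rightarrow> 'v) \<Rightarrow> 'a list \<Rightarrow> 'v \<Rightarrow> 'v" where
  "rep_word \<pi> us = foldl (\<lambda>f u. \<pi> u \<circ> f) id us"

text \<open>Representations on a complex vector space V (the type 'v with scalar
  multiplication scale :: complex \<Rightarrow> 'v \<Rightarrow> 'v satisfying the vector space axioms).\<close>
definition rack_rep ::
  "(complex \<Rightarrow> 'v::ab_group_add \<Rightarrow> 'v) \<Rightarrow> ('a \<Rightarrow> 'a \<Rightarrow> 'a) \<Rightarrow> ('a \<Rightarrow> 'v \<Rightarrow> 'v) \<Rightarrow> bool" where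
  "rack_rep scale op \<pi> \<longleftrightarrow>
     (\<forall>x. Vector_Spaces.linear scale scale (\<pi> x) \<and> bij (\<pi> x)) \<and>
     (\<forall>x y. \<pi> (op x y) = \<pi> y \<circ> \<pi> x \<circ> inv (\<pi> y))"

definition strong_rep :: "('a \<Rightarrow> 'a \<Rightarrow> 'a) \<Rightarrow> ('a \<Rightarrow> 'v \<Rightarrow> 'v) \<Rightarrow> bool" where
  "strong_rep op \<pi> \<longleftrightarrow> (\<forall>us. stabilizing op us \<longrightarrow> rep_word \<pi> us = id)"

definition irreducible_rep ::
  "(complex \<Rightarrow> 'v::ab_group_add \<Rightarrow> 'v) \<Rightarrow> ('a \<Rightarrow> 'v \<Rightarrow> 'v) \<Rightarrow> bool" where
  "irreducible_rep scale \<pi> \<longleftrightarrow> (UNIV :: 'v set) \<noteq> {0} \<and>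
     (\<forall>W. module.subspace scale W \<longrightarrow> (\<forall>x. \<pi> x ` W \<subseteq> W) \<longrightarrow> W = {0} \<or> W = UNIV)"

end

theory Submission
  imports Defs
begin

text \<open>For an involutive rack the family (x, x) is stabilizing, so a strong representation makes
  every \<open>\<pi> x\<close> an involution. An involution of V without nonzero fixed vectors is \<open>-id\<close>,
  because \<open>v + \<pi> x\<^sub>0 v\<close> is always fixed. By connectedness every \<open>\<pi> x\<close> is conjugate to
  \<open>\<pi> x\<^sub>0 = -id\<close>, hence equal to it. Then every subspace is invariant, so irreducibility
  forces V to be a line.\<close>

lemma rep_word_pair: "rep_word \<pi> [x, y] = \<pi> y \<circ> \<pi> x"
  by (simp add: rep_word_def)

lemma involutive_rack_stabilizing_pair:
  assumes "involutive_rack op"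
  shows "stabilizing op [x, x]"
  using assms by (simp add: involutive_rack_def stabilizing_def)

lemma strong_rep_involution:
  assumes "involutive_rack op" and "strong_rep op \<pi>"
  shows "\<pi> x (\<pi> x v) = v"
proof -
  have "rep_word \<pi> [x, x] = id"
    using assms(2) involutive_rack_stabilizing_pair[OF assms(1)]
    unfolding strong_rep_def by blast
  then have "(\<pi> x \<circ> \<pi> x) v = v"
    unfolding rep_word_pair by simp
  then show ?thesis
    by simp
qed

lemma additive_involution_eq_uminus:
  fixes f :: "'v::ab_group_add \<Rightarrow> 'v"
  assumes add: "\<And>a b. f (a + b) = f a + f b"
    and involution: "\<And>v. f (f v) = v"
    and no_fixed_points: "{v. f v = v} = {0}"
  shows "f v = - v"
proof -
  have "f (v + f v) = v + f v"
    by (simp add: add involution add.commute)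
  then have "v + f v = 0"
    using no_fixed_points by blast
  then show ?thesis
    by (simp add: eq_neg_iff_add_eq_0 add.commute)
qed

lemma rack_rep_additive:
  assumes "vector_space scale" and "rack_rep scale op \<pi>"
  shows "\<pi> x (a + b) = \<pi> x a + \<pi> x b"
    and "\<pi> x (- a) = - \<pi> x a"
proof -
  interpret vector_space scale by fact
  have "Vector_Spaces.linear scale scale (\<pi> x)"
    using assms(2) unfolding rack_rep_def by blast
  then interpret module_hom scale scale "\<pi> x"
    by (rule module_hom_linearI)
  show "\<pi> x (a + b) = \<pi> x a + \<pi> x b" and "\<pi> x (- a) = - \<pi> x a"
    by (rule add, rule neg)
qed

lemma connected_rack_rep_eq_uminus:
  assumes "vector_space scale" and rep: "rack_rep scale op \<pi>"
    and "connected_rack op" and x0: "\<And>v. \<pi> x\<^sub>0 v = - v"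
  shows "\<pi> x v = - v"
proof -
  obtain y where y: "x = op x\<^sub>0 y"
    using assms(3) unfolding connected_rack_def by blast
  have "\<pi> x v = \<pi> y (- inv (\<pi> y) v)"
    using y x0 rep by (simp add: rack_rep_def)
  also have "\<dots> = - \<pi> y (inv (\<pi> y) v)"
    using rack_rep_additive(2)[OF assms(1,2)] .
  also have "\<pi> y (inv (\<pi> y) v) = v"
    using rep unfolding rack_rep_def by (meson bij_inv_eq_iff)
  finally show ?thesis .
qed

lemma (in vector_space) dim_UNIV_eq_1_if_simple:
  assumes nontrivial: "(UNIV :: 'b set) \<noteq> {0}"
    and simple: "\<And>W. subspace W \<Longrightarrow> W = {0} \<or> W = UNIV"
  shows "dim (UNIV :: 'b set) = 1"
proof -
  obtain v :: 'b where v: "v \<noteq> 0"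
    using nontrivial by blast
  have "span {v} \<noteq> {0}"
    using span_base[of v "{v}"] v by auto
  then have span: "span {v} = UNIV"
    using simple[OF subspace_span] by blast
  have "independent {v}"
    using v independent_insertI[of v "{}"] span_empty by auto
  then have "dim (span {v}) = card {v}"
    by (rule dim_span_eq_card_independent)
  then show ?thesis
    using span by simp
qed

theorem mainTheorem15:
  fixes op :: "'a \<Rightarrow> 'a \<Rightarrow> 'a"
    and scale :: "complex \<Rightarrow> 'v::ab_group_add \<Rightarrow> 'v"
    and \<pi> :: "'a \<Rightarrow> 'v \<Rightarrow> 'v"
  assumes "vector_space scale"
    and "rack op" and "involutive_rack op" and "connected_rack op"
    and "rack_rep scale op \<pi>"
    and "strong_rep op \<pi>"
    and "irreducible_rep scale \<pi>"
    and "\<exists>x0. {v. \<pi> x0 v = v} = {0}"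
  shows "vector_space.dim scale (UNIV :: 'v set) = 1"
proof -
  interpret vector_space scale by fact
  obtain x\<^sub>0 where x0: "{v. \<pi> x\<^sub>0 v = v} = {0}"
    using assms(8) by blast
  have "\<pi> x\<^sub>0 v = - v" for v
    using additive_involution_eq_uminus rack_rep_additive(1)[OF assms(1,5)]
      strong_rep_involution[OF assms(3,6)] x0 by blast
  then have minus: "\<pi> x v = - v" for x v
    using connected_rack_rep_eq_uminus[OF assms(1,5,4)] by blast
  have "W = {0} \<or> W = UNIV" if "subspace W" for W
    using assms(7) that subspace_neg by (auto simp: irreducible_rep_def minus)
  then show ?thesis
    using assms(7) dim_UNIV_eq_1_if_simple by (auto simp: irreducible_rep_def)
qed

end
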